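(* Let $\xi$ be a Hausdorff convergence. Then $\xi$ is symmetrizable if and only if $\xi$ is sequential and $\mathrm{I}_1\xi$ is a semi-metrizable pretopology.
   Context: A convergence $\xi$ on a set $X$ is a relation between filters on $X$ and points, $x\in\lim_\xi\mathcal{F}$, with $\mathcal{F}\le\mathcal{G}\Rightarrow\lim_\xi\mathcal{F}\subset\lim_\xi\mathcal{G}$ and $x\in\lim_\xi\{x\}^\uparrow$; $\xi\ge\theta$ means $\lim_\xi\mathcal{F}\subset\lim_\theta\mathcal{F}$ for all $\mathcal{F}$. Hausdorff: each filter has at most one limit. A set $O$ is $\xi$-open if $\lim_\xi\mathcal{F}\cap O\ne\emptyset\Rightarrow O\in\mathcal{F}$; $\mathrm{T}\xi$ is the topology of $\xi$-open sets. $x\in\lim_{\mathrm{I}_1\xi}\mathcal{F}$ iff there is a countably based filter $\mathcal{H}\le\mathcal{F}$ with $x\in\lim_\xi\mathcal{H}$. $\xi$ is sequential if $\xi\ge\mathrm{T}\mathrm{I}_1\xi$. A semi-metric on $X$ is $d:X\times X\to[0,\infty)$ symmetric with $d(x,y)=0\iff x=y$; $\tilde d$ is the pretopology in which $\mathcal{F}$ converges to $x$ iff $\mathcal{F}$ contains all balls $B(x,\epsilon)=\{y:d(x,y)<\epsilon\}$, $\epsilon>0$. $\xi$ is semi-metrizable if $\xi=\tilde d$ for some semi-metric $d$, and symmetrizable if $\tilde d\ge\xi\ge\mathrm{T}\tilde d$ for some semi-metric $d$ on $X$. *)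

theory Defs
  imports Complex_Main
begin

text \<open>A convergence on the type 'a (the underlying set X is UNIV) is represented by its
limit operator L :: 'a filter => 'a set.  Isabelle's filter order is reversed w.r.t.
the paper: Isabelle F <= G means F is finer (contains more sets).  So the paper's
"F <= G implies L F subset L G" reads "G <= F implies L F subset L G" here.
Filters include the degenerate filter bot; Hausdorffness is required for proper filters.\<close>

definition convergence :: "('a filter \<Rightarrow> 'a set) \<Rightarrow> bool" where
  "convergence L \<longleftrightarrow>
     (\<forall>F G. G \<le> F \<longrightarrow> L F \<subseteq> L G) \<and> (\<forall>x. x \<in> L (principal {x}))"

definition conv_ge :: "('a filter \<Rightarrow> 'a set) \<Rightarrow> ('a filter \<Rightarrow> 'a set) \<Rightarrow> bool" where
  "conv_ge xi theta \<longleftrightarrow> (\<forall>F. xi F \<subseteq> theta F)"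

definition hausdorff_conv :: "('a filter \<Rightarrow> 'a set) \<Rightarrow> bool" where
  "hausdorff_conv L \<longleftrightarrow> (\<forall>F. F \<noteq> bot \<longrightarrow> (\<forall>x y. x \<in> L F \<and> y \<in> L F \<longrightarrow> x = y))"

definition sets_of :: "'a filter \<Rightarrow> 'a set set" where
  "sets_of F = {A. eventually (\<lambda>x. x \<in> A) F}"

definition conv_open :: "('a filter \<Rightarrow> 'a set) \<Rightarrow> 'a set \<Rightarrow> bool" where
  "conv_open L U \<longleftrightarrow> (\<forall>F. L F \<inter> U \<noteq> {} \<longrightarrow> U \<in> sets_of F)"


definition Tconv :: "('a filter \<Rightarrow> 'a set) \<Rightarrow> 'a filter \<Rightarrow> 'a set" where
  "Tconv L F = {x. \<forall>U. conv_open L U \<and> x \<in> U \<longrightarrow> U \<in> sets_of F}"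

definition countably_based :: "'a filter \<Rightarrow> bool" where
  "countably_based H \<longleftrightarrow> (\<exists>B :: nat \<Rightarrow> 'a set.
      \<forall>P. eventually P H \<longleftrightarrow> (\<exists>n. \<forall>x\<in>B n. P x))"

definition I1 :: "('a filter \<Rightarrow> 'a set) \<Rightarrow> 'a filter \<Rightarrow> 'a set" where
  "I1 L F = {x. \<exists>H. countably_based H \<and> F \<le> H \<and> x \<in> L H}"

definition sequential_conv :: "('a filter \<Rightarrow> 'a set) \<Rightarrow> bool" where
  "sequential_conv L \<longleftrightarrow> conv_ge L (Tconv (I1 L))"

text \<open>Pretopology: the vicinity filter (paper's infimum of all filters converging to x,
which is Isabelle's Sup) converges to x.\<close>
definition pretopology :: "('a filter \<Rightarrow> 'a set) \<Rightarrow> bool" where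
  "pretopology L \<longleftrightarrow> (\<forall>x. x \<in> L (Sup {F. x \<in> L F}))"

definition semimetric :: "('a \<Rightarrow> 'a \<Rightarrow> real) \<Rightarrow> bool" where
  "semimetric d \<longleftrightarrow> (\<forall>x y. d x y \<ge> 0 \<and> d x y = d y x \<and> (d x y = 0 \<longleftrightarrow> x = y))"

definition semimetric_conv :: "('a \<Rightarrow> 'a \<Rightarrow> real) \<Rightarrow> 'a filter \<Rightarrow> 'a set" where
  "semimetric_conv d F = {x. \<forall>e>0. {y. d x y < e} \<in> sets_of F}"

definition semi_metrizable :: "('a filter \<Rightarrow> 'a set) \<Rightarrow> bool" where
  "semi_metrizable L \<longleftrightarrow> (\<exists>d. semimetric d \<and> L = semimetric_conv d)"

definition symmetrizable :: "('a filter \<Rightarrow> 'a set) \<Rightarrow> bool" where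
  "symmetrizable L \<longleftrightarrow> (\<exists>d. semimetric d \<and>
     conv_ge (semimetric_conv d) L \<and> conv_ge L (Tconv (semimetric_conv d)))"

end

theory Submission
  imports Defs
begin

text \<open>
  If \<open>\<tilde>d \<ge> \<xi> \<ge> T \<tilde>d\<close>, then every countably based filter \<open>H\<close> with \<open>x \<in> lim\<^sub>\<xi> H\<close> already
  \<open>\<tilde>d\<close>-converges to \<open>x\<close>: otherwise some ball \<open>B(x, e)\<close> misses a sequence \<open>y\<close> that is finer
  than \<open>H\<close>. Its range is \<open>\<tilde>d\<close>-closed, because a point \<open>w\<close> off the range at distance
  \<open>0\<close> from it would be a second \<open>\<xi>\<close>-limit of a proper filter finer than the sequence,
  so \<open>w = x\<close>, contradicting \<open>d(x, y n) \<ge> e\<close>. Then \<open>x\<close> has a \<open>T \<tilde>d\<close>-open neighbourhood avoiding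
  the whole sequence, contradicting \<open>x \<in> lim\<^sub>\<xi> y \<subseteq> lim\<^bsub>T \<tilde>d\<^esub> y\<close>. Hence \<open>I\<^sub>1 \<xi> = \<tilde>d\<close>, which
  gives one direction; the other is immediate since \<open>I\<^sub>1 \<xi> \<ge> \<xi>\<close>.
\<close>

definition semimetric_nhds :: "('a \<Rightarrow> 'a \<Rightarrow> real) \<Rightarrow> 'a \<Rightarrow> 'a filter" where
  "semimetric_nhds d x = (INF e\<in>{0<..}. principal {y. d x y < e})"

lemma eventually_semimetric_nhds:
  "eventually P (semimetric_nhds d x) \<longleftrightarrow> (\<exists>e>0. \<forall>y. d x y < e \<longrightarrow> P y)"
proof -
  have "eventually P (semimetric_nhds d x) \<longleftrightarrow>
          (\<exists>e\<in>{0<..}. eventually P (principal {y. d x y < (e::real)}))"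
    unfolding semimetric_nhds_def
  proof (rule eventually_INF_base)
    fix a b :: real assume "a \<in> {0<..}" "b \<in> {0<..}"
    then show "\<exists>c\<in>{0<..}. principal {y. d x y < c} \<le>
                 inf (principal {y. d x y < a}) (principal {y. d x y < b})"
      by (intro bexI[of _ "min a b"]) auto
  qed auto
  then show ?thesis by (auto simp: eventually_principal)
qed

lemma semimetric_conv_iff_le_nhds: "x \<in> semimetric_conv d F \<longleftrightarrow> F \<le> semimetric_nhds d x"
  unfolding semimetric_conv_def sets_of_def le_filter_def eventually_semimetric_nhds
  by (auto elim!: eventually_mono)

lemma countably_based_semimetric_nhds: "countably_based (semimetric_nhds d x)"
  unfolding countably_based_def
proof (intro exI[of _ "\<lambda>n. {y. d x y < 1 / real (Suc n)}"] allI iffI)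
  fix P assume "eventually P (semimetric_nhds d x)"
  then obtain e where "e > 0" and P: "\<forall>y. d x y < e \<longrightarrow> P y"
    by (auto simp: eventually_semimetric_nhds)
  then obtain n where "1 / real (Suc n) < e"
    using reals_Archimedean by (auto simp: inverse_eq_divide)
  with P show "\<exists>n. \<forall>y\<in>{y. d x y < 1 / real (Suc n)}. P y"
    by (metis less_trans mem_Collect_eq)
next
  fix P assume "\<exists>n. \<forall>y\<in>{y. d x y < 1 / real (Suc n)}. P y"
  then obtain n where "\<forall>y. d x y < 1 / real (Suc n) \<longrightarrow> P y" by blast
  then show "eventually P (semimetric_nhds d x)"
    by (auto simp: eventually_semimetric_nhds intro!: exI[of _ "1 / real (Suc n)"])
qed

lemma pretopology_semimetric_conv: "pretopology (semimetric_conv d)"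
  unfolding pretopology_def semimetric_conv_iff_le_nhds by (auto intro: Sup_least)

lemma convergence_antimono: "convergence L \<Longrightarrow> G \<le> F \<Longrightarrow> L F \<subseteq> L G"
  unfolding convergence_def by blast

lemma conv_ge_I1: "convergence L \<Longrightarrow> conv_ge (I1 L) L"
  unfolding conv_ge_def I1_def convergence_def by blast

lemma countably_based_not_eventually_sequence:
  assumes "countably_based H" and "\<not> eventually P H"
  obtains y where "filtermap y sequentially \<le> H" and "\<And>n. \<not> P (y n)"
proof -
  obtain B :: "nat \<Rightarrow> 'a set" where B: "\<And>P. eventually P H \<longleftrightarrow> (\<exists>n. \<forall>x\<in>B n. P x)"
    using assms(1) unfolding countably_based_def by blast
  have "\<exists>z. (\<forall>k\<le>n. z \<in> B k) \<and> \<not> P z" for n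
  proof (rule ccontr)
    assume none: "\<nexists>z. (\<forall>k\<le>n. z \<in> B k) \<and> \<not> P z"
    have "eventually (\<lambda>z. \<forall>k\<in>{..n}. z \<in> B k) H"
      by (rule eventually_ball_finite) (use B in auto)
    then have "eventually P H" by (rule eventually_mono) (use none in auto)
    with assms(2) show False ..
  qed
  then obtain y where y: "\<And>n k. k \<le> n \<Longrightarrow> y n \<in> B k" and notP: "\<And>n. \<not> P (y n)"
    by metis
  have "filtermap y sequentially \<le> H"
  proof (rule filter_leI)
    fix Q assume "eventually Q H"
    then obtain k where "\<forall>z\<in>B k. Q z" using B by blast
    with y show "eventually Q (filtermap y sequentially)"
      by (auto simp: eventually_filtermap eventually_sequentially)
  qed
  then show thesis using notP by (rule that)
qed

lemma positive_inf_zero_frequently_small: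
  fixes a :: "nat \<Rightarrow> real"
  assumes small: "\<And>\<delta>. \<delta> > 0 \<Longrightarrow> \<exists>n. a n < \<delta>" and pos: "\<And>n. 0 < a n" and "\<delta> > 0"
  shows "\<exists>n\<ge>N. a n < \<delta>"
proof -
  define \<delta>' where "\<delta>' = Min (insert \<delta> (a ` {..<N}))"
  have "\<delta>' > 0" unfolding \<delta>'_def using \<open>\<delta> > 0\<close> pos by (subst Min_gr_iff) auto
  then obtain n where n: "a n < \<delta>'" using small by blast
  have "\<delta>' \<le> \<delta>" and below: "\<And>k. k < N \<Longrightarrow> \<delta>' \<le> a k"
    unfolding \<delta>'_def by (auto intro: Min_le)
  moreover have "N \<le> n" using n below by (meson leD not_le)
  ultimately show ?thesis using n by auto
qed

lemma semimetric_cluster_point_inf_not_bot: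
  assumes "semimetric d" and "\<And>n. y n \<noteq> w" and small: "\<And>\<delta>. \<delta> > 0 \<Longrightarrow> \<exists>n. d w (y n) < \<delta>"
  shows "inf (filtermap y sequentially) (semimetric_nhds d w) \<noteq> bot"
proof
  assume "inf (filtermap y sequentially) (semimetric_nhds d w) = bot"
  then have "eventually (\<lambda>_. False) (inf (filtermap y sequentially) (semimetric_nhds d w))"
    by simp
  then obtain Q R where Q: "eventually Q (filtermap y sequentially)"
    and R: "eventually R (semimetric_nhds d w)" and QR: "\<And>z. Q z \<Longrightarrow> R z \<Longrightarrow> False"
    unfolding eventually_inf by blast
  from Q obtain N where N: "\<And>m. m \<ge> N \<Longrightarrow> Q (y m)"
    unfolding eventually_filtermap eventually_sequentially by blast
  from R obtain \<delta> where "\<delta> > 0" and \<delta>: "\<And>z. d w z < \<delta> \<Longrightarrow> R z"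
    by (auto simp: eventually_semimetric_nhds)
  have "0 < d w (y n)" for n
    using assms(1) assms(2)[of n] unfolding semimetric_def by (metis order_le_less)
  then obtain m where "m \<ge> N" "d w (y m) < \<delta>"
    using positive_inf_zero_frequently_small[OF small _ \<open>\<delta> > 0\<close>] by blast
  with N \<delta> QR show False by blast
qed

lemma conv_open_compl_range:
  assumes conv: "convergence xi" and haus: "hausdorff_conv xi" and "semimetric d"
    and ge: "conv_ge (semimetric_conv d) xi"
    and x: "x \<in> xi (filtermap y sequentially)" and "e > 0" and far: "\<And>n. e \<le> d x (y n)"
  shows "conv_open (semimetric_conv d) (- range y)"
  unfolding conv_open_def
proof (intro allI impI)
  fix F assume "semimetric_conv d F \<inter> - range y \<noteq> {}"
  then obtain w where w: "w \<in> semimetric_conv d F" and "w \<notin> range y" by blast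
  have "\<exists>\<delta>>0. \<forall>n. \<delta> \<le> d w (y n)"
  proof (rule ccontr)
    assume "\<not> (\<exists>\<delta>>0. \<forall>n. \<delta> \<le> d w (y n))"
    then have small: "\<And>\<delta>. \<delta> > 0 \<Longrightarrow> \<exists>n. d w (y n) < \<delta>" by (meson not_le)
    define G where "G = inf (filtermap y sequentially) (semimetric_nhds d w)"
    have "G \<noteq> bot"
      unfolding G_def using \<open>semimetric d\<close> \<open>w \<notin> range y\<close> small
      by (intro semimetric_cluster_point_inf_not_bot) auto
    moreover have "x \<in> xi G"
      unfolding G_def using x convergence_antimono[OF conv inf_le1] by blast
    moreover have "w \<in> xi G"
      using ge semimetric_conv_iff_le_nhds[of w d G] by (auto simp: conv_ge_def G_def)
    ultimately have "w = x" using haus unfolding hausdorff_conv_def by blast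
    with small[OF \<open>e > 0\<close>] far show False by (meson leD)
  qed
  then obtain \<delta> where "\<delta> > 0" and \<delta>: "\<And>n. \<delta> \<le> d w (y n)" by blast
  from w \<open>\<delta> > 0\<close> have "eventually (\<lambda>z. d w z < \<delta>) F"
    by (auto simp: semimetric_conv_def sets_of_def)
  then have "eventually (\<lambda>z. z \<in> - range y) F"
    by (rule eventually_mono) (use \<delta> in \<open>auto dest: leD\<close>)
  then show "- range y \<in> sets_of F" by (simp add: sets_of_def)
qed

lemma symmetrizing_countably_based_le_nhds:
  assumes conv: "convergence xi" and haus: "hausdorff_conv xi" and sm: "semimetric d"
    and ge1: "conv_ge (semimetric_conv d) xi"
    and ge2: "conv_ge xi (Tconv (semimetric_conv d))"
    and "countably_based H" and xH: "x \<in> xi H"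
  shows "H \<le> semimetric_nhds d x"
proof -
  have "eventually (\<lambda>z. d x z < e) H" if "e > 0" for e
  proof (rule ccontr)
    assume "\<not> eventually (\<lambda>z. d x z < e) H"
    with \<open>countably_based H\<close> obtain y where yH: "filtermap y sequentially \<le> H"
      and far: "\<And>n. \<not> d x (y n) < e"
      by (rule countably_based_not_eventually_sequence) blast
    have x: "x \<in> xi (filtermap y sequentially)"
      using convergence_antimono[OF conv yH] xH by blast
    have "conv_open (semimetric_conv d) (- range y)"
      using conv_open_compl_range[OF conv haus sm ge1 x \<open>e > 0\<close>] far by (simp add: not_less)
    moreover have "x \<notin> range y"
    proof
      assume "x \<in> range y"
      then obtain n where "y n = x" by blast
      moreover have "d x x = 0" using sm by (simp add: semimetric_def)
      ultimately show False using far[of n] \<open>e > 0\<close> by simp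
    qed
    moreover have "x \<in> Tconv (semimetric_conv d) (filtermap y sequentially)"
      using ge2 x by (auto simp: conv_ge_def)
    ultimately have "eventually (\<lambda>z. z \<in> - range y) (filtermap y sequentially)"
      by (auto simp: Tconv_def sets_of_def)
    then show False by (simp add: eventually_filtermap)
  qed
  then have "x \<in> semimetric_conv d H" by (simp add: semimetric_conv_def sets_of_def)
  then show ?thesis by (simp add: semimetric_conv_iff_le_nhds)
qed

lemma symmetrizing_I1_eq:
  assumes "convergence xi" and "hausdorff_conv xi" and "semimetric d"
    and ge1: "conv_ge (semimetric_conv d) xi"
    and "conv_ge xi (Tconv (semimetric_conv d))"
  shows "I1 xi = semimetric_conv d"
proof (intro ext set_eqI iffI)
  fix F x assume "x \<in> I1 xi F"
  then obtain H where "countably_based H" "F \<le> H" "x \<in> xi H" by (auto simp: I1_def)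
  then have "F \<le> semimetric_nhds d x"
    using symmetrizing_countably_based_le_nhds[OF assms] by (blast intro: order_trans)
  then show "x \<in> semimetric_conv d F" by (simp add: semimetric_conv_iff_le_nhds)
next
  fix F x assume "x \<in> semimetric_conv d F"
  moreover have "x \<in> xi (semimetric_nhds d x)"
    using ge1 semimetric_conv_iff_le_nhds[of x d "semimetric_nhds d x"]
    by (auto simp: conv_ge_def)
  ultimately show "x \<in> I1 xi F"
    unfolding I1_def semimetric_conv_iff_le_nhds
    using countably_based_semimetric_nhds[of d x] by blast
qed

theorem corollary3p3:
  fixes xi :: "'a filter \<Rightarrow> 'a set"
  assumes "convergence xi" and "hausdorff_conv xi"
  shows "symmetrizable xi \<longleftrightarrow>
           sequential_conv xi \<and> pretopology (I1 xi) \<and> semi_metrizable (I1 xi)"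
proof
  assume "symmetrizable xi"
  then obtain d where "semimetric d" and ge1: "conv_ge (semimetric_conv d) xi"
    and ge2: "conv_ge xi (Tconv (semimetric_conv d))"
    unfolding symmetrizable_def by blast
  have "I1 xi = semimetric_conv d"
    using symmetrizing_I1_eq[OF assms \<open>semimetric d\<close> ge1 ge2] .
  then show "sequential_conv xi \<and> pretopology (I1 xi) \<and> semi_metrizable (I1 xi)"
    using \<open>semimetric d\<close> ge2 pretopology_semimetric_conv
    unfolding sequential_conv_def semi_metrizable_def by auto
next
  assume "sequential_conv xi \<and> pretopology (I1 xi) \<and> semi_metrizable (I1 xi)"
  then obtain d where "semimetric d" and "I1 xi = semimetric_conv d"
    and "conv_ge xi (Tconv (I1 xi))"
    unfolding semi_metrizable_def sequential_conv_def by blast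
  then show "symmetrizable xi"
    using conv_ge_I1[OF assms(1)] unfolding symmetrizable_def by auto
qed

end
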